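(* Let $G=(V,E)$ be a connected simple graph and let $\pi:V\to\mathbb{N}$ be any injection. Then the graph $G^{(\pi)}$ is connected.
   Context: For a vertex $u$, $N(u)=\{v\in V: uv\in E\}$ is its open neighbourhood. Given an injection $\pi:V\to\mathbb{N}$ (an ordering of the vertices), an ordered pair $(u,v)\in V^2$ is called good with respect to $\pi$ if $uv\in E$, $\pi(u)<\pi(v)$, and $\pi(u)<\pi(w)$ for every $w\in N(u)\cap N(v)$. The graph $G^{(\pi)}=(V,E^{(\pi)})$ is the spanning subgraph of $G$ with edge set $E^{(\pi)}=\{\{u,v\}: (u,v)\text{ is good with respect to }\pi\}$. *)

theory Defs
  imports Main
begin

definition simple_graph :: "'a set \<Rightarrow> 'a set set \<Rightarrow> bool" where
  "simple_graph V E \<longleftrightarrow> finite V \<and> (\<forall>e\<in>E. e \<subseteq> V \<and> card e = 2)"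

definition nbhd :: "'a set set \<Rightarrow> 'a \<Rightarrow> 'a set" where
  "nbhd E u = {v. {u, v} \<in> E}"

fun is_walk :: "'a set set \<Rightarrow> 'a list \<Rightarrow> bool" where
  "is_walk E [] = False"
| "is_walk E [x] = True"
| "is_walk E (x # y # xs) = ({x, y} \<in> E \<and> is_walk E (y # xs))"

definition connected_graph :: "'a set \<Rightarrow> 'a set set \<Rightarrow> bool" where
  "connected_graph V E \<longleftrightarrow> V \<noteq> {} \<and>
     (\<forall>u\<in>V. \<forall>v\<in>V. \<exists>p. is_walk E p \<and> hd p = u \<and> last p = v)"

definition good_pair :: "'a set set \<Rightarrow> ('a \<Rightarrow> nat) \<Rightarrow> 'a \<Rightarrow> 'a \<Rightarrow> bool" where
  "good_pair E \<pi> u v \<longleftrightarrow> {u, v} \<in> E \<and> \<pi> u < \<pi> v \<and>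
     (\<forall>w \<in> nbhd E u \<inter> nbhd E v. \<pi> u < \<pi> w)"

definition pi_edges :: "'a set set \<Rightarrow> ('a \<Rightarrow> nat) \<Rightarrow> 'a set set" where
  "pi_edges E \<pi> = {{u, v} | u v. good_pair E \<pi> u v}"

end

theory Submission
  imports Defs
begin

text \<open>
  Every edge \<open>{u, v}\<close> with \<open>\<pi> u < \<pi> v\<close> is joined by a path of good edges, by strong
  induction on \<open>\<pi> u\<close>: if \<open>(u, v)\<close> is not good, some common neighbour \<open>w\<close> has
  \<open>\<pi> w < \<pi> u\<close>, so the edges \<open>{w, u}\<close> and \<open>{w, v}\<close> are covered by the induction
  hypothesis. Hence every walk of the graph lifts to a walk of good edges.
\<close>

abbreviation adjacent :: "'a set set \<Rightarrow> 'a \<Rightarrow> 'a \<Rightarrow> bool" where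
  "adjacent E x y \<equiv> {x, y} \<in> E"

lemma symp_adjacent: "symp (adjacent E)"
  by (rule sympI) (simp add: insert_commute)

lemma is_walk_imp_rtranclp: "is_walk E p \<Longrightarrow> (adjacent E)\<^sup>*\<^sup>* (hd p) (last p)"
  by (induction E p rule: is_walk.induct) (auto intro: converse_rtranclp_into_rtranclp)

lemma rtranclp_imp_is_walk:
  "(adjacent E)\<^sup>*\<^sup>* x y \<Longrightarrow> \<exists>p. is_walk E p \<and> hd p = x \<and> last p = y"
proof (induction rule: converse_rtranclp_induct)
  case base
  show ?case by (intro exI[of _ "[y]"]) simp
next
  case (step a b)
  then obtain p where p: "is_walk E p" "hd p = b" "last p = y" by blast
  then obtain q where "p = b # q" by (cases p) auto
  with p step(1) show ?case by (intro exI[of _ "a # p"]) simp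
qed

lemma connected_graph_iff_rtranclp:
  "connected_graph V E \<longleftrightarrow> V \<noteq> {} \<and> (\<forall>u\<in>V. \<forall>v\<in>V. (adjacent E)\<^sup>*\<^sup>* u v)"
proof -
  have "(\<exists>p. is_walk E p \<and> hd p = u \<and> last p = v) \<longleftrightarrow> (adjacent E)\<^sup>*\<^sup>* u v" for u v
  proof
    assume "\<exists>p. is_walk E p \<and> hd p = u \<and> last p = v"
    then obtain p where "is_walk E p" "hd p = u" "last p = v" by blast
    then show "(adjacent E)\<^sup>*\<^sup>* u v" using is_walk_imp_rtranclp[of E p] by simp
  qed (rule rtranclp_imp_is_walk)
  then show ?thesis unfolding connected_graph_def by simp
qed

lemma simple_graph_edgeD:
  assumes "simple_graph V E" "{a, b} \<in> E"
  shows "a \<in> V" "b \<in> V" "a \<noteq> b"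
proof -
  have "{a, b} \<subseteq> V" "card {a, b} = 2"
    using assms unfolding simple_graph_def by auto
  then show "a \<in> V" "b \<in> V" "a \<noteq> b" by (auto simp: card_insert_if split: if_splits)
qed

lemma good_pair_imp_adjacent_pi_edges: "good_pair E \<pi> u v \<Longrightarrow> adjacent (pi_edges E \<pi>) u v"
  unfolding pi_edges_def by blast

lemma not_good_pair_imp_lower_common_neighbour:
  assumes "simple_graph V E" "inj_on \<pi> V" "{u, v} \<in> E" "\<pi> u < \<pi> v" "\<not> good_pair E \<pi> u v"
  obtains w where "{w, u} \<in> E" "{w, v} \<in> E" "\<pi> w < \<pi> u"
proof -
  obtain w where w: "{u, w} \<in> E" "{v, w} \<in> E" "\<pi> w \<le> \<pi> u"
    using assms(3-5) unfolding good_pair_def nbhd_def by force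
  have "\<pi> w \<noteq> \<pi> u"
    using simple_graph_edgeD[OF assms(1) w(1)] assms(2) by (metis inj_onD)
  with w(3) have "\<pi> w < \<pi> u" by simp
  with w(1,2) show thesis by (metis that insert_commute)
qed

lemma edge_imp_rtranclp_pi_edges:
  assumes "simple_graph V E" "inj_on \<pi> V" "{u, v} \<in> E"
  shows "(adjacent (pi_edges E \<pi>))\<^sup>*\<^sup>* u v"
proof -
  let ?R = "(adjacent (pi_edges E \<pi>))\<^sup>*\<^sup>*"
  have sym: "?R y x" if "?R x y" for x y
    using sympD[OF symp_rtranclp[OF symp_adjacent] that] .
  have ordered: "?R a b" if "{a, b} \<in> E" "\<pi> a < \<pi> b" for a b
    using that
  proof (induction "\<pi> a" arbitrary: a b rule: less_induct)
    case less
    show ?case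
    proof (cases "good_pair E \<pi> a b")
      case True
      then show ?thesis by (intro r_into_rtranclp good_pair_imp_adjacent_pi_edges)
    next
      case False
      then obtain w where w: "{w, a} \<in> E" "{w, b} \<in> E" "\<pi> w < \<pi> a"
        by (rule not_good_pair_imp_lower_common_neighbour[OF assms(1,2) less.prems])
      have "\<pi> w < \<pi> b" using w(3) less.prems(2) by linarith
      have "?R w a" by (rule less.hyps[OF w(3) w(1,3)])
      moreover have "?R w b" by (rule less.hyps[OF w(3) w(2) \<open>\<pi> w < \<pi> b\<close>])
      ultimately show ?thesis by (rule rtranclp_trans[OF sym])
    qed
  qed
  have "\<pi> u \<noteq> \<pi> v"
    using simple_graph_edgeD[OF assms(1,3)] assms(2) by (metis inj_onD)
  then consider "\<pi> u < \<pi> v" | "\<pi> v < \<pi> u" by linarith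
  then show ?thesis
  proof cases
    case 1
    then show ?thesis by (rule ordered[OF assms(3)])
  next
    case 2
    have "{v, u} \<in> E" using assms(3) by (simp add: insert_commute)
    from ordered[OF this 2] show ?thesis by (rule sym)
  qed
qed

theorem lemma2:
  fixes V :: "'a set" and E :: "'a set set" and \<pi> :: "'a \<Rightarrow> nat"
  assumes "simple_graph V E"
    and "connected_graph V E"
    and "inj_on \<pi> V"
  shows "connected_graph V (pi_edges E \<pi>)"
proof -
  have "adjacent E \<le> (adjacent (pi_edges E \<pi>))\<^sup>*\<^sup>*"
    by (intro predicate2I edge_imp_rtranclp_pi_edges[OF assms(1,3)])
  from rtranclp_mono[OF this]
  have "(adjacent E)\<^sup>*\<^sup>* \<le> (adjacent (pi_edges E \<pi>))\<^sup>*\<^sup>*" by simp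
  with assms(2) show ?thesis
    unfolding connected_graph_iff_rtranclp by (auto dest: predicate2D)
qed

end
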